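(* Let $N>2$ be an odd positive integer, $K$ a positive integer, and $0<Z_x\le N$, $0<Z_y\le K$ integers. Let $f:\mathbb{Z}_N\to\mathbb{Z}_K$ be such that for all integers $a,b$ with $-Z_x<a<Z_x$, $a\ne0$, $-Z_y<b<Z_y$, the equation $f(x+a)-f(x)=b$ (with $x+a$ computed in $\mathbb{Z}_N$ and the equation in $\mathbb{Z}_K$) has at most one solution $x\in\mathbb{Z}_N$. For $0\le k<N$ let $\mathbf{a}_k=(a_k(0),\dots,a_k(K-1))$ with $a_k(t)=\omega_K^{tf(k)}$. Let $\mathbf{h}_0,\dots,\mathbf{h}_{N-1}$ be unimodular complex sequences of length $N$ such that for all $0\le i\ne j<N$ and all $0\le v<N$, $$\Big|\sum_{n=0}^{N-1}h_i(n)h_j^*(n)\Big|\le 1,\qquad \Big|\sum_{n=0}^{N-1}h_i(n)h_j^*(n)\omega_N^{nv}\Big|<N.$$ For $0\le i<N$ define $\mathbf{s}_i$ of length $NK$ by $s_i(tN+k)=h_i(k)a_k(t)$ for $0\le t<K$, $0\le k<N$, and let $\mathcal{S}=\{\mathbf{s}_0,\dots,\mathbf{s}_{N-1}\}$. Then $\mathcal{S}$ is an aperiodic $(N,NK,\Pi,K+Z_x-1)$-LAZ sequence set with $\Pi=(-Z_x,Z_x)\times(-Z_y,Z_y)$; that is, for all integers $(\tau,v)\in\Pi$: $|\hat{AF}_{\mathbf{s}_i}(\tau,v)|\le K+Z_x-1$ for every $i$ whenever $(\tau,v)\ne(0,0)$, and $|\hat{AF}_{\mathbf{s}_i,\mathbf{s}_j}(\tau,v)|\le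 K+Z_x-1$ for all $i\ne j$.
   Context: $\omega_L=e^{2\pi\sqrt{-1}/L}$, $z^*$ is complex conjugation, and a sequence is unimodular if all entries have modulus 1. For sequences $\mathbf{a},\mathbf{b}$ of length $L$, the aperiodic cross-ambiguity function is $\hat{AF}_{\mathbf{a},\mathbf{b}}(\tau,v)=\sum_{t=0}^{L-1-\tau}a(t)b^*(t+\tau)\omega_L^{vt}$ for $0\le\tau\le L-1$, $\hat{AF}_{\mathbf{a},\mathbf{b}}(\tau,v)=\sum_{t=-\tau}^{L-1}a(t)b^*(t+\tau)\omega_L^{vt}$ for $-L<\tau<0$, and $0$ for $|\tau|\ge L$; $\hat{AF}_{\mathbf{a}}=\hat{AF}_{\mathbf{a},\mathbf{a}}$. A set of $M$ sequences of length $L$ is an $(M,L,\Pi,\hat\theta)$-LAZ aperiodic sequence set if the maximum of $|\hat{AF}_{\mathbf{a}}(\tau,v)|$ over sequences in the set and $(0,0)\ne(\tau,v)\in\Pi$, and of $|\hat{AF}_{\mathbf{a},\mathbf{b}}(\tau,v)|$ over distinct $\mathbf{a},\mathbf{b}$ in the set and $(\tau,v)\in\Pi$, is $\hat\theta$ (here: at most $\hat\theta$). *)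

theory Defs
  imports "HOL-Analysis.Analysis"
begin

definition omega :: "nat \<Rightarrow> complex" where
  "omega L = exp (2 * pi * \<i> / of_nat L)"

text \<open>Aperiodic cross-ambiguity function of sequences a, b of length L
  (entries a(0),...,a(L-1); values outside are irrelevant).\<close>
definition aperiodic_AF :: "nat \<Rightarrow> (nat \<Rightarrow> complex) \<Rightarrow> (nat \<Rightarrow> complex) \<Rightarrow> int \<Rightarrow> int \<Rightarrow> complex" where
  "aperiodic_AF L a b \<tau> v =
     (if 0 \<le> \<tau> \<and> \<tau> < int L then
        (\<Sum>t\<in>{0..<L - nat \<tau>}. a t * cnj (b (t + nat \<tau>)) * omega L powi (v * int t))
      else if - int L < \<tau> \<and> \<tau> < 0 then
        (\<Sum>t\<in>{nat (- \<tau>)..<L}. a t * cnj (b (t - nat (- \<tau>))) * omega L powi (v * int t))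
      else 0)"

definition unimodular :: "nat \<Rightarrow> (nat \<Rightarrow> complex) \<Rightarrow> bool" where
  "unimodular L h \<longleftrightarrow> (\<forall>n<L. cmod (h n) = 1)"

text \<open>The sequences a_k(t) = omega_K^(t f(k)), with f(k) a representative in {0..<K}\<close>
definition seq_a :: "nat \<Rightarrow> (nat \<Rightarrow> nat) \<Rightarrow> nat \<Rightarrow> nat \<Rightarrow> complex" where
  "seq_a K f k t = omega K ^ (t * f k)"

definition seq_s :: "nat \<Rightarrow> nat \<Rightarrow> (nat \<Rightarrow> nat) \<Rightarrow> (nat \<Rightarrow> nat \<Rightarrow> complex) \<Rightarrow> nat \<Rightarrow> nat \<Rightarrow> complex" where
  "seq_s N K f h i n = h i (n mod N) * seq_a K f (n mod N) (n div N)"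

end

theory Submission
  imports Defs
begin

text \<open>Write the index as n = t N + k with k < N. For a shift 0 \<le> \<tau> < N the ambiguity function of
  s_i and s_j splits into N column sums: column k is a unimodular coefficient times a geometric
  sum of powers of \<omega>_K^e with e = f(k) - f((k + \<tau>) mod N) + v, taken over t < K, or over
  t < K - 1 for the \<tau> columns whose partner index k + \<tau> wraps into the next block. Such a sum has
  modulus K if K divides e and is otherwise bounded by the number of omitted terms, so
  |AF(\<tau>, v)| \<le> K #{k. K divides e} + \<tau>. For 0 < \<tau> < Z_x the difference condition on f makes the
  count at most 1; for \<tau> = 0 and 0 < |v| < K it is 0; and AF(0, 0) is K times the correlation of
  h_i and h_j. Negative shifts reduce to positive ones by conjugate symmetry.\<close>

lemma omega_powi_conv_exp: "omega L powi m = exp (of_int m * (2 * pi * \<i> / of_nat L))"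
  by (simp add: omega_def exp_power_int)

lemma norm_omega_powi [simp]: "norm (omega L powi m) = 1"
  unfolding omega_powi_conv_exp by (simp add: norm_exp_eq_Re)

lemma cnj_omega_powi: "cnj (omega L powi m) = omega L powi (- m)"
  unfolding omega_powi_conv_exp exp_cnj by simp

lemma omega_powi_add: "omega L powi (m + n) = omega L powi m * omega L powi n"
  by (simp add: power_int_add omega_def)

lemma omega_powi_eq_1_iff:
  assumes "L > 0"
  shows "omega L powi m = 1 \<longleftrightarrow> int L dvd m"
proof
  assume "omega L powi m = 1"
  then obtain n where "real_of_int m * (2 * pi) / L = 2 * real_of_int n * pi"
    unfolding omega_powi_conv_exp exp_eq_1 by auto
  then have "real_of_int m = real_of_int (n * int L)"
    using assms by (simp add: field_simps)
  then show "int L dvd m"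
    by (metis dvd_triv_right of_int_eq_iff)
next
  assume "int L dvd m"
  then obtain n where "m = int L * n" ..
  with assms have "of_int m * (2 * pi * \<i> / of_nat L) = \<i> * (of_int n * (of_real pi * 2))"
    by (simp add: field_simps)
  then show "omega L powi m = 1"
    unfolding omega_powi_conv_exp by (simp add: exp_2pi_1_int)
qed

lemma omega_powi_power_eq_1 [simp]: "(omega L powi m) ^ L = 1"
proof (cases "L = 0")
  case False
  have "(omega L powi m) ^ L = omega L powi (m * int L)"
    by (simp add: power_int_mult flip: power_int_of_nat)
  with False show ?thesis
    by (simp add: omega_powi_eq_1_iff)
qed simp

lemma omega_powi_mult:
  assumes "N > 0"
  shows "omega K powi m = omega (N * K) powi (int N * m)"
proof -
  have "omega (N * K) ^ N = omega K"
    using assms unfolding omega_def exp_of_nat_mult[symmetric] by (simp add: field_simps)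
  then show ?thesis
    by (metis power_int_mult power_int_of_nat)
qed

lemma norm_sum_powers_root_of_unity_le:
  fixes z :: "'a :: real_normed_field"
  assumes "z ^ K = 1"
  shows "norm (\<Sum>t<K - c. z ^ t) \<le> (if z = 1 then real (K - c) else real c)"
proof (cases "z = 1 \<or> K \<le> c")
  case True
  then show ?thesis by auto
next
  case False
  then have "norm z = 1"
    using assms power_eq_1_iff by fastforce
  have "(\<Sum>t<K - c. z ^ t) + (\<Sum>t\<in>{K - c..<K}. z ^ t) = (\<Sum>t<K. z ^ t)"
    by (simp add: atLeast0LessThan[symmetric] sum.atLeastLessThan_concat)
  also have "\<dots> = 0"
    using False assms by (simp add: sum_gp_strict)
  finally have "norm (\<Sum>t<K - c. z ^ t) = norm (\<Sum>t\<in>{K - c..<K}. z ^ t)"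
    by (metis add_eq_0_iff norm_minus_cancel)
  also have "\<dots> \<le> (\<Sum>t\<in>{K - c..<K}. norm (z ^ t))"
    by (rule norm_sum)
  also have "\<dots> = real c"
    using False \<open>norm z = 1\<close> by (simp add: norm_power)
  finally show ?thesis
    using False by simp
qed

lemma aperiodic_AF_neg_shift:
  assumes "0 < \<tau>" "\<tau> < L"
  shows "aperiodic_AF L a b (- int \<tau>) v = omega L powi (v * int \<tau>) * cnj (aperiodic_AF L b a (int \<tau>) (- v))"
proof -
  have "aperiodic_AF L a b (- int \<tau>) v = (\<Sum>t\<in>{\<tau>..<L}. a t * cnj (b (t - \<tau>)) * omega L powi (v * int t))"
    using assms by (simp add: aperiodic_AF_def)
  also have "\<dots> = (\<Sum>m<L - \<tau>. a (m + \<tau>) * cnj (b (m + \<tau> - \<tau>)) * omega L powi (v * int (m + \<tau>)))"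
    using assms sum.shift_bounds_nat_ivl[of "\<lambda>t. a t * cnj (b (t - \<tau>)) * omega L powi (v * int t)" 0 \<tau> "L - \<tau>"]
    by (simp add: atLeast0LessThan)
  also have "\<dots> = (\<Sum>m<L - \<tau>. omega L powi (v * int \<tau>) * cnj (b m * cnj (a (m + \<tau>)) * omega L powi (- v * int m)))"
    unfolding complex_cnj_mult complex_cnj_cnj cnj_omega_powi
    by (intro sum.cong refl) (simp add: algebra_simps flip: omega_powi_add)
  also have "\<dots> = omega L powi (v * int \<tau>) * cnj (aperiodic_AF L b a (int \<tau>) (- v))"
    using assms by (simp add: aperiodic_AF_def sum_distrib_left atLeast0LessThan cnj_sum)
  finally show ?thesis .
qed

lemma norm_aperiodic_AF_neg_shift:
  assumes "0 < \<tau>" "\<tau> < L"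
  shows "cmod (aperiodic_AF L a b (- int \<tau>) v) = cmod (aperiodic_AF L b a (int \<tau>) (- v))"
  using assms by (simp add: aperiodic_AF_neg_shift norm_mult)

lemma sum_add_div_eq_self:
  fixes N \<tau> :: nat
  assumes "\<tau> \<le> N"
  shows "(\<Sum>k<N. (k + \<tau>) div N) = \<tau>"
proof -
  have "(\<Sum>k<N. (k + \<tau>) div N) = (\<Sum>k<N. if N \<le> k + \<tau> then 1 else 0)"
    using assms by (intro sum.cong) (auto simp: div_if le_div_geq)
  also have "\<dots> = card {k \<in> {..<N}. N \<le> k + \<tau>}"
    by (simp add: sum.If_cases Int_def)
  also have "{k \<in> {..<N}. N \<le> k + \<tau>} = {N - \<tau>..<N}"
    using assms by auto
  finally show ?thesis
    using assms by simp
qed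

lemma block_index_less_iff:
  fixes N K t k \<tau> :: nat
  assumes "k < N"
  shows "t * N + k + \<tau> < N * K \<longleftrightarrow> t < K - (k + \<tau>) div N"
proof -
  have "(t * N + k + \<tau>) div N = t + (k + \<tau>) div N"
    using assms by (simp add: add.assoc)
  then show ?thesis
    using assms div_less_iff_less_mult[of N "t * N + k + \<tau>" K] by (auto simp: mult.commute)
qed

locale interleaved =
  fixes N K :: nat and f :: "nat \<Rightarrow> nat" and h :: "nat \<Rightarrow> nat \<Rightarrow> complex"
  assumes N_pos: "0 < N" and K_pos: "0 < K"
begin

lemma N_le_mult_K: "N \<le> N * K"
  using K_pos by simp

abbreviation s :: "nat \<Rightarrow> nat \<Rightarrow> complex" where
  "s \<equiv> seq_s N K f h"

text \<open>The partner index t N + k + \<tau> lies in block t + (k + \<tau>) div N at position (k + \<tau>) mod N;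
  the carry (k + \<tau>) div N produces the last factor of \<open>block_coeff\<close>.\<close>

definition block_exponent :: "nat \<Rightarrow> int \<Rightarrow> nat \<Rightarrow> int" where
  "block_exponent \<tau> v k = int (f k) - int (f ((k + \<tau>) mod N)) + v"

definition block_coeff :: "nat \<Rightarrow> nat \<Rightarrow> nat \<Rightarrow> int \<Rightarrow> nat \<Rightarrow> complex" where
  "block_coeff i j \<tau> v k = h i k * cnj (h j ((k + \<tau>) mod N)) * omega (N * K) powi (v * int k)
     * omega K powi (- int ((k + \<tau>) div N * f ((k + \<tau>) mod N)))"

lemma seq_s_block: "k < N \<Longrightarrow> s i (t * N + k) = h i k * omega K ^ (t * f k)"
  by (simp add: seq_s_def seq_a_def)

lemma seq_s_block_product:
  assumes "k < N"
  shows "s i (t * N + k) * cnj (s j (t * N + k + \<tau>)) * omega (N * K) powi (v * int (t * N + k))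
    = block_coeff i j \<tau> v k * (omega K powi block_exponent \<tau> v k) ^ t"
proof -
  define c k' where "c = (k + \<tau>) div N" and "k' = (k + \<tau>) mod N"
  have "t * N + k + \<tau> = (t + c) * N + k'" and "k' < N"
    using N_pos by (simp_all add: c_def k'_def algebra_simps)
  then have s_j: "s j (t * N + k + \<tau>) = h j k' * omega K ^ ((t + c) * f k')"
    by (simp add: seq_s_block)
  have to_NK: "omega K powi m = omega (N * K) powi (int N * m)"
      "omega K ^ n = omega (N * K) powi (int N * int n)"
      "(omega (N * K) powi m) ^ t = omega (N * K) powi (m * int t)" for m n
    using omega_powi_mult[OF N_pos, of K] by (simp_all add: power_int_mult flip: power_int_of_nat)
  have "h i k * cnj (h j k') * (omega (N * K) powi (int N * int (t * f k))
        * omega (N * K) powi (- (int N * int ((t + c) * f k'))) * omega (N * K) powi (v * int (t * N + k)))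
      = h i k * cnj (h j k') * (omega (N * K) powi (v * int k) * omega (N * K) powi (int N * - int (c * f k'))
        * omega (N * K) powi (int N * block_exponent \<tau> v k * int t))"
    unfolding omega_powi_add[symmetric] block_exponent_def k'_def[symmetric]
    by (simp add: algebra_simps)
  then show ?thesis
    unfolding seq_s_block[OF assms] s_j block_coeff_def to_NK k'_def[symmetric] c_def[symmetric]
      complex_cnj_mult cnj_omega_powi
    by (simp add: mult_ac)
qed

lemma aperiodic_AF_block_decomposition:
  assumes "\<tau> < N * K"
  shows "aperiodic_AF (N * K) (s i) (s j) (int \<tau>) v
    = (\<Sum>k<N. block_coeff i j \<tau> v k * (\<Sum>t<K - (k + \<tau>) div N. (omega K powi block_exponent \<tau> v k) ^ t))"
proof -
  define g where "g n = s i n * cnj (s j (n + \<tau>)) * omega (N * K) powi (v * int n)" for n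
  have "{n \<in> {..<N * K}. n + \<tau> < N * K} = {0..<N * K - \<tau>}"
    by auto
  with assms have "aperiodic_AF (N * K) (s i) (s j) (int \<tau>) v = (\<Sum>n<N * K. if n + \<tau> < N * K then g n else 0)"
    by (simp add: aperiodic_AF_def g_def sum.If_cases Int_def flip: of_nat_mult)
  also have "\<dots> = (\<Sum>t<K. \<Sum>k<N. if k + t * N + \<tau> < N * K then g (k + t * N) else 0)"
    using sum_mult_product[of "\<lambda>n. if n + \<tau> < N * K then g n else 0" K N] by (simp add: mult.commute)
  also have "\<dots> = (\<Sum>k<N. \<Sum>t<K. if t * N + k + \<tau> < N * K then g (t * N + k) else 0)"
    by (subst sum.swap, intro sum.cong refl) (simp add: add.commute)
  also have "\<dots> = (\<Sum>k<N. \<Sum>t<K - (k + \<tau>) div N. g (t * N + k))"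
  proof (rule sum.cong[OF refl])
    fix k
    assume "k \<in> {..<N}"
    then have "{t \<in> {..<K}. t * N + k + \<tau> < N * K} = {..<K - (k + \<tau>) div N}"
      by (auto simp: block_index_less_iff)
    then show "(\<Sum>t<K. if t * N + k + \<tau> < N * K then g (t * N + k) else 0) = (\<Sum>t<K - (k + \<tau>) div N. g (t * N + k))"
      by (metis (no_types) finite_lessThan sum.inter_filter)
  qed
  also have "\<dots> = (\<Sum>k<N. \<Sum>t<K - (k + \<tau>) div N. block_coeff i j \<tau> v k * (omega K powi block_exponent \<tau> v k) ^ t)"
    by (intro sum.cong refl) (simp only: g_def lessThan_iff seq_s_block_product)
  finally show ?thesis
    by (simp add: sum_distrib_left)
qed

lemma norm_block_coeff:
  assumes "k < N" "unimodular N (h i)" "unimodular N (h j)"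
  shows "norm (block_coeff i j \<tau> v k) = 1"
  using assms N_pos by (simp add: block_coeff_def unimodular_def norm_mult)

lemma norm_block_sum_le:
  "norm (\<Sum>t<K - c. (omega K powi block_exponent \<tau> v k) ^ t)
     \<le> (if int K dvd block_exponent \<tau> v k then real K else 0) + real c"
  using norm_sum_powers_root_of_unity_le[OF omega_powi_power_eq_1, of K "block_exponent \<tau> v k" c]
  by (auto simp: omega_powi_eq_1_iff[OF K_pos] split: if_splits)

lemma norm_aperiodic_AF_le:
  assumes "\<tau> < N" "unimodular N (h i)" "unimodular N (h j)"
  shows "cmod (aperiodic_AF (N * K) (s i) (s j) (int \<tau>) v)
    \<le> real K * card {k \<in> {..<N}. int K dvd block_exponent \<tau> v k} + real \<tau>"
proof -
  have NK: "\<tau> < N * K"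
    using assms(1) N_le_mult_K by linarith
  have "cmod (aperiodic_AF (N * K) (s i) (s j) (int \<tau>) v)
      \<le> (\<Sum>k<N. norm (\<Sum>t<K - (k + \<tau>) div N. (omega K powi block_exponent \<tau> v k) ^ t))"
    unfolding aperiodic_AF_block_decomposition[OF NK]
    by (rule order_trans[OF norm_sum], intro sum_mono) (simp add: norm_mult norm_block_coeff assms)
  also have "\<dots> \<le> (\<Sum>k<N. (if int K dvd block_exponent \<tau> v k then real K else 0) + real ((k + \<tau>) div N))"
    by (intro sum_mono norm_block_sum_le)
  also have "\<dots> = real K * card {k \<in> {..<N}. int K dvd block_exponent \<tau> v k} + real \<tau>"
    using sum_add_div_eq_self[of \<tau> N] assms(1)
    by (simp add: sum.distrib sum.If_cases Int_def flip: of_nat_sum)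
  finally show ?thesis .
qed

lemma aperiodic_AF_0_0:
  "aperiodic_AF (N * K) (s i) (s j) 0 0 = of_nat K * (\<Sum>k<N. h i k * cnj (h j k))"
proof -
  have "aperiodic_AF (N * K) (s i) (s j) (int 0) 0
      = (\<Sum>k<N. block_coeff i j 0 0 k * (\<Sum>t<K - k div N. (omega K powi block_exponent 0 0 k) ^ t))"
    using aperiodic_AF_block_decomposition[of 0 i j 0] N_pos K_pos by simp
  also have "\<dots> = (\<Sum>k<N. of_nat K * (h i k * cnj (h j k)))"
    by (intro sum.cong refl) (simp add: block_coeff_def block_exponent_def)
  finally show ?thesis
    by (simp add: sum_distrib_left)
qed

lemma norm_aperiodic_AF_nonneg_shift_le:
  assumes "\<tau> < N" "\<bar>v\<bar> < int K" "unimodular N (h i)" "unimodular N (h j)"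
    and few_solutions: "0 < \<tau> \<Longrightarrow> card {k \<in> {..<N}. int K dvd block_exponent \<tau> v k} \<le> 1"
    and cross_corr: "\<tau> = 0 \<Longrightarrow> v = 0 \<Longrightarrow> cmod (\<Sum>k<N. h i k * cnj (h j k)) \<le> 1"
  shows "cmod (aperiodic_AF (N * K) (s i) (s j) (int \<tau>) v) \<le> real K + real \<tau>"
proof (cases "0 < \<tau> \<or> v \<noteq> 0")
  case True
  have "real K * card {k \<in> {..<N}. int K dvd block_exponent \<tau> v k} \<le> real K"
  proof (cases "0 < \<tau>")
    case False
    with True assms(2) have "\<not> int K dvd v"
      using dvd_imp_le_int[of v "int K"] by auto
    with False have no_k: "{k \<in> {..<N}. int K dvd block_exponent \<tau> v k} = {}"
      by (auto simp: block_exponent_def)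
    show ?thesis
      unfolding no_k by simp
  qed (use few_solutions in \<open>auto intro: mult_left_le\<close>)
  with norm_aperiodic_AF_le[OF assms(1,3,4), of v] show ?thesis
    by linarith
next
  case False
  then show ?thesis
    using cross_corr by (simp add: aperiodic_AF_0_0 norm_mult mult_left_le)
qed

lemma shift_difference_set_eq:
  "{x \<in> {0..<N}. (int (f (nat ((int x + int \<tau>) mod int N))) - int (f x)) mod int K = v mod int K}
     = {k \<in> {..<N}. int K dvd block_exponent \<tau> v k}"
proof -
  have "nat ((int x + int \<tau>) mod int N) = (x + \<tau>) mod N" for x
    by (simp flip: of_nat_add of_nat_mod)
  moreover have "(a - b) mod int K = v mod int K \<longleftrightarrow> int K dvd b - a + v" for a b :: int
    by (simp add: mod_eq_dvd_iff diff_diff_eq dvd_diff_commute[of _ a "b + v"] algebra_simps)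
  ultimately show ?thesis
    by (auto simp: block_exponent_def)
qed

lemma norm_aperiodic_AF_le_LAZ_bound:
  assumes "Zx \<le> N" "Zy \<le> K"
    and unimodular: "\<And>i. i < N \<Longrightarrow> unimodular N (h i)"
    and cross_corr: "\<And>i j. i < N \<Longrightarrow> j < N \<Longrightarrow> i \<noteq> j \<Longrightarrow> cmod (\<Sum>k<N. h i k * cnj (h j k)) \<le> 1"
    and few_solutions: "\<And>\<sigma> w. 0 < \<sigma> \<Longrightarrow> \<sigma> < Zx \<Longrightarrow> \<bar>w\<bar> < int Zy \<Longrightarrow>
      card {k \<in> {..<N}. int K dvd block_exponent \<sigma> w k} \<le> 1"
    and "i < N" "j < N" "\<bar>\<tau>\<bar> < int Zx" "\<bar>v\<bar> < int Zy" "(\<tau>, v) \<noteq> (0, 0) \<or> i \<noteq> j"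
  shows "cmod (aperiodic_AF (N * K) (s i) (s j) \<tau> v) \<le> real (K + Zx - 1)"
proof -
  have nonneg: "cmod (aperiodic_AF (N * K) (s i') (s j') (int \<sigma>) w) \<le> real (K + Zx - 1)"
    if "i' < N" "j' < N" "\<sigma> < Zx" "\<bar>w\<bar> < int Zy" "\<sigma> = 0 \<and> w = 0 \<longrightarrow> i' \<noteq> j'" for i' j' \<sigma> w
  proof -
    have "cmod (aperiodic_AF (N * K) (s i') (s j') (int \<sigma>) w) \<le> real K + real \<sigma>"
      using that assms(1,2) unimodular cross_corr few_solutions by (intro norm_aperiodic_AF_nonneg_shift_le) auto
    with that show ?thesis
      by linarith
  qed
  show ?thesis
  proof (cases "0 \<le> \<tau>")
    case True
    then show ?thesis
      using assms nonneg[of i j "nat \<tau>" v] by simp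
  next
    case False
    define \<sigma> where "\<sigma> = nat (- \<tau>)"
    have \<sigma>: "\<tau> = - int \<sigma>" "0 < \<sigma>" "\<sigma> < Zx"
      using False assms by (auto simp: \<sigma>_def)
    moreover have "\<sigma> < N * K"
      using \<sigma>(3) assms(1) N_le_mult_K by linarith
    ultimately have "cmod (aperiodic_AF (N * K) (s i) (s j) \<tau> v)
        = cmod (aperiodic_AF (N * K) (s j) (s i) (int \<sigma>) (- v))"
      by (simp add: norm_aperiodic_AF_neg_shift)
    then show ?thesis
      using assms \<sigma> nonneg[of j i \<sigma> "- v"] by auto
  qed
qed

end

theorem theorem2:
  fixes N K Zx Zy :: nat
    and f :: "nat \<Rightarrow> nat"
    and h :: "nat \<Rightarrow> nat \<Rightarrow> complex"
  assumes N_gt: "N > 2" and N_odd: "odd N" and K_pos: "K > 0"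
    and Zx: "0 < Zx" "Zx \<le> N" and Zy: "0 < Zy" "Zy \<le> K"
    and f_range: "\<forall>x<N. f x < K"
    and f_diff: "\<forall>a b. - int Zx < a \<and> a < int Zx \<and> a \<noteq> 0 \<and> - int Zy < b \<and> b < int Zy \<longrightarrow>
        card {x \<in> {0..<N}. (int (f (nat ((int x + a) mod int N))) - int (f x)) mod int K = b mod int K} \<le> 1"
    and h_unimod: "\<forall>i<N. unimodular N (h i)"
    and h_corr: "\<forall>i<N. \<forall>j<N. i \<noteq> j \<longrightarrow> cmod (\<Sum>n<N. h i n * cnj (h j n)) \<le> 1"
    and h_dopp: "\<forall>i<N. \<forall>j<N. i \<noteq> j \<longrightarrow> (\<forall>v<N.
        cmod (\<Sum>n<N. h i n * cnj (h j n) * omega N ^ (n * v)) < real N)"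
  shows "(\<forall>i<N. \<forall>\<tau> v. - int Zx < \<tau> \<and> \<tau> < int Zx \<and> - int Zy < v \<and> v < int Zy \<and> (\<tau>, v) \<noteq> (0, 0) \<longrightarrow>
            cmod (aperiodic_AF (N * K) (seq_s N K f h i) (seq_s N K f h i) \<tau> v) \<le> real (K + Zx - 1))
       \<and> (\<forall>i<N. \<forall>j<N. i \<noteq> j \<longrightarrow> (\<forall>\<tau> v. - int Zx < \<tau> \<and> \<tau> < int Zx \<and> - int Zy < v \<and> v < int Zy \<longrightarrow>
            cmod (aperiodic_AF (N * K) (seq_s N K f h i) (seq_s N K f h j) \<tau> v) \<le> real (K + Zx - 1)))"
proof -
  interpret interleaved N K f h
    using N_gt K_pos by unfold_locales auto
  have few_solutions: "card {k \<in> {..<N}. int K dvd block_exponent \<sigma> w k} \<le> 1"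
    if "0 < \<sigma>" "\<sigma> < Zx" "\<bar>w\<bar> < int Zy" for \<sigma> w
    unfolding shift_difference_set_eq[symmetric]
    using f_diff[rule_format, of "int \<sigma>" w] that by (auto simp: abs_less_iff)
  have "cmod (aperiodic_AF (N * K) (s i) (s j) \<tau> v) \<le> real (K + Zx - 1)"
    if "i < N" "j < N" "\<bar>\<tau>\<bar> < int Zx" "\<bar>v\<bar> < int Zy" "(\<tau>, v) \<noteq> (0, 0) \<or> i \<noteq> j" for i j \<tau> v
    using norm_aperiodic_AF_le_LAZ_bound[OF Zx(2) Zy(2) _ _ few_solutions that] h_unimod h_corr by blast
  then show ?thesis
    by (auto simp: abs_less_iff)
qed

end
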